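(* Let $c_1,c_2\ge 2$ be integers, let $d$ be prime, and let $f:\mathbb{Z}_{c_1}\times\mathbb{Z}_{c_2}\to\mathbb{Z}_d$ be a function that cannot be written as $f(s_1,s_2)=g_1(s_1)+g_2(s_2)$ (mod $d$) for any functions $g_1:\mathbb{Z}_{c_1}\to\mathbb{Z}_d$, $g_2:\mathbb{Z}_{c_2}\to\mathbb{Z}_d$. Then the only non-signaling distribution $p(m_1,m_2|s_1,s_2)$ on $\mathbb{Z}_d^2$ satisfying $p(m_1+m_2\equiv f(s_1,s_2)\,|\,s_1,s_2)=1$ for all $(s_1,s_2)$ is $$p(m_1,m_2|s_1,s_2)=\begin{cases}d^{-1}&\text{if } m_1+m_2\equiv f(s_1,s_2)\pmod d,\\0&\text{otherwise.}\end{cases}$$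
   Context: A bipartite conditional distribution $p(m_1,m_2|s_1,s_2)$ with $m_1,m_2\in\mathbb{Z}_d$ and $s_j\in\mathbb{Z}_{c_j}$ is non-signaling if the marginal $\sum_{m_2}p(m_1,m_2|s_1,s_2)$ does not depend on $s_2$ and the marginal $\sum_{m_1}p(m_1,m_2|s_1,s_2)$ does not depend on $s_1$. *)

theory Defs
  imports "HOL-Analysis.Analysis" "HOL-Computational_Algebra.Primes"
begin

text \<open>Z_n is represented by the natural numbers {0..<n}. A bipartite conditional
distribution p(m1,m2|s1,s2) is a real function p m1 m2 s1 s2.\<close>

definition cond_distr :: "nat \<Rightarrow> nat \<Rightarrow> nat \<Rightarrow> (nat \<Rightarrow> nat \<Rightarrow> nat \<Rightarrow> nat \<Rightarrow> real) \<Rightarrow> bool" where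
  "cond_distr d c1 c2 p \<longleftrightarrow>
     (\<forall>s1<c1. \<forall>s2<c2.
        (\<forall>m1<d. \<forall>m2<d. p m1 m2 s1 s2 \<ge> 0) \<and>
        (\<Sum>m1<d. \<Sum>m2<d. p m1 m2 s1 s2) = 1)"

definition non_signaling :: "nat \<Rightarrow> nat \<Rightarrow> nat \<Rightarrow> (nat \<Rightarrow> nat \<Rightarrow> nat \<Rightarrow> nat \<Rightarrow> real) \<Rightarrow> bool" where
  "non_signaling d c1 c2 p \<longleftrightarrow>
     cond_distr d c1 c2 p \<and>
     (\<forall>m1<d. \<forall>s1<c1. \<forall>s2<c2. \<forall>s2'<c2.
        (\<Sum>m2<d. p m1 m2 s1 s2) = (\<Sum>m2<d. p m1 m2 s1 s2')) \<and>
     (\<forall>m2<d. \<forall>s2<c2. \<forall>s1<c1. \<forall>s1'<c1.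
        (\<Sum>m1<d. p m1 m2 s1 s2) = (\<Sum>m1<d. p m1 m2 s1' s2))"

end

theory Submission
  imports Defs "HOL-Number_Theory.Cong"
begin

(* Let p be a non-signaling strategy that always outputs m1 + m2 = f(s1,s2)
   (mod d).  Then p is supported on the winning pairs, and for a winning pair the second
   output is determined by the first, so Alice's marginal A_s1(m1) equals
   p(m1, f(s1,s2) - m1 | s1,s2), which in turn is Bob's marginal B_s2(f(s1,s2) - m1).
   Eliminating Bob's marginal gives A_s1'(y) = A_s1(y + f(s1,s2) - f(s1',s2)) for every s2.
   Comparing s2 = 0 with s2 = t2 shows that A_0 is periodic with period the "twist"
   f(t1,t2) + f(0,0) - f(t1,0) - f(0,t2).  If f is not additive, some twist is nonzero
   mod d; as d is prime it is then coprime to d, so A_0 (and hence every A_s1) is constant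
   on Z_d, equal to 1/d by normalisation, and p(m1,m2|s1,s2) = A_s1(m1) on winning pairs. *)

lemma sum_nonneg_zero_outside:
  fixes g :: "'a \<Rightarrow> 'b::ordered_ab_group_add"
  assumes "finite T" "W \<subseteq> T" "\<And>x. x \<in> T \<Longrightarrow> 0 \<le> g x"
    and "sum g W = sum g T" and "x \<in> T - W"
  shows "g x = 0"
proof -
  have "sum g T = sum g W + sum g (T - W)"
    using sum.subset_diff[OF assms(2,1)] by (simp add: add.commute)
  with assms(4) have "sum g (T - W) = 0" by simp
  moreover have "\<And>y. y \<in> T - W \<Longrightarrow> 0 \<le> g y" using assms(3) by blast
  ultimately show ?thesis
    using sum_nonneg_eq_0_iff[of "T - W" g] assms(1,5) by blast
qed

lemma mod_add_eq_iff:
  fixes m1 m2 r d :: nat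
  assumes "m2 < d" "r < d"
  shows "(m1 + m2) mod d = r \<longleftrightarrow> m2 = nat ((int r - int m1) mod int d)"
proof -
  have "(m1 + m2) mod d = r \<longleftrightarrow> [m1 + m2 = r] (mod d)"
    using assms(2) by (simp add: cong_def)
  also have "\<dots> \<longleftrightarrow> [int m2 = int r - int m1] (mod int d)"
    by (simp add: cong_int_iff[symmetric] cong_iff_dvd_diff algebra_simps)
  also have "\<dots> \<longleftrightarrow> int m2 = (int r - int m1) mod int d"
    using assms(1) by (simp add: cong_def)
  also have "\<dots> \<longleftrightarrow> m2 = nat ((int r - int m1) mod int d)"
    using assms(1) by auto
  finally show ?thesis .
qed

text \<open>A function on the integers that factors through Z_d and is invariant under a shift
  coprime to d is constant: the shift generates Z_d.\<close>

lemma periodic_coprime_const: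
  fixes a :: "int \<Rightarrow> 'b" and d \<delta> :: int
  assumes "0 < d" and mod_inv: "\<And>x. a (x mod d) = a x" and shift_inv: "\<And>x. a (x + \<delta>) = a x"
    and "coprime \<delta> d"
  shows "a x = a 0"
proof -
  have iter: "a (int n * \<delta>) = a 0" for n :: nat
  proof (induction n)
    case (Suc n)
    then show ?case using shift_inv[of "int n * \<delta>"] by (simp add: algebra_simps)
  qed simp
  obtain k where k: "[\<delta> * k = 1] (mod d)"
    using cong_solve_coprime_int[OF \<open>coprime \<delta> d\<close>] by blast
  define m where "m = (x * k) mod d"
  have "m \<ge> 0" using \<open>0 < d\<close> by (simp add: m_def)
  have "(m * \<delta>) mod d = (x * (\<delta> * k)) mod d"
    unfolding m_def by (metis mod_mult_left_eq mult.commute mult.left_commute)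
  also have "\<dots> = x mod d"
    using k unfolding cong_def by (metis mod_mult_right_eq mult.right_neutral)
  finally have "(m * \<delta>) mod d = x mod d" .
  then have "a x = a (m * \<delta>)" by (metis mod_inv)
  also have "\<dots> = a 0" using iter[of "nat m"] \<open>m \<ge> 0\<close> by simp
  finally show ?thesis .
qed

lemma additive_if_twists_vanish:
  fixes f :: "nat \<Rightarrow> nat \<Rightarrow> nat"
  assumes "0 < c1" "0 < c2" and f_range: "\<forall>s1<c1. \<forall>s2<c2. f s1 s2 < d"
    and twists: "\<And>s1 s2. s1 < c1 \<Longrightarrow> s2 < c2 \<Longrightarrow> [f s1 s2 + f 0 0 = f s1 0 + f 0 s2] (mod d)"
  shows "\<exists>g1 g2 :: nat \<Rightarrow> nat. (\<forall>s1<c1. g1 s1 < d) \<and> (\<forall>s2<c2. g2 s2 < d) \<and>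
           (\<forall>s1<c1. \<forall>s2<c2. f s1 s2 = (g1 s1 + g2 s2) mod d)"
proof (intro exI conjI allI impI)
  define g1 where "g1 s1 = f s1 0" for s1
  define g2 where "g2 s2 = (f 0 s2 + d - f 0 0) mod d" for s2
  have f00: "f 0 0 < d" using f_range assms(1,2) by blast
  show "g1 s1 < d" if "s1 < c1" for s1 using f_range that assms(2) by (simp add: g1_def)
  show "g2 s2 < d" if "s2 < c2" for s2 using f00 by (simp add: g2_def)
  fix s1 s2 assume s: "s1 < c1" "s2 < c2"
  have "(g1 s1 + g2 s2 + f 0 0) mod d = (f s1 0 + (f 0 s2 + d - f 0 0) + f 0 0) mod d"
    unfolding g1_def g2_def by (metis mod_add_left_eq mod_add_right_eq)
  then have "[g1 s1 + g2 s2 + f 0 0 = f s1 0 + f 0 s2 + d] (mod d)"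
    using f00 by (simp add: cong_def add.assoc[symmetric])
  also have "[f s1 0 + f 0 s2 + d = f s1 s2 + f 0 0] (mod d)"
    using twists[OF s] by (simp add: cong_def cong_sym_eq)
  finally have "[g1 s1 + g2 s2 = f s1 s2] (mod d)" by (simp only: cong_add_rcancel_nat)
  then show "f s1 s2 = (g1 s1 + g2 s2) mod d"
    using f_range s by (simp add: cong_def)
qed

locale perfect_strategy =
  fixes d c1 c2 :: nat and f :: "nat \<Rightarrow> nat \<Rightarrow> nat"
    and p :: "nat \<Rightarrow> nat \<Rightarrow> nat \<Rightarrow> nat \<Rightarrow> real"
  assumes c1_pos: "0 < c1" and c2_pos: "0 < c2"
    and f_range: "\<forall>s1<c1. \<forall>s2<c2. f s1 s2 < d"
    and ns: "non_signaling d c1 c2 p"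
    and win: "\<forall>s1<c1. \<forall>s2<c2.
          (\<Sum>(m1, m2) \<in> {(m1, m2). m1 < d \<and> m2 < d \<and> (m1 + m2) mod d = f s1 s2}.
             p m1 m2 s1 s2) = 1"
begin

lemma d_pos: "0 < d"
  using f_range c1_pos c2_pos by fastforce

lemma f_less: "s1 < c1 \<Longrightarrow> s2 < c2 \<Longrightarrow> f s1 s2 < d"
  using f_range by blast

lemma distr: "cond_distr d c1 c2 p"
  using ns by (simp add: non_signaling_def)

lemma vanish_off_win:
  assumes "s1 < c1" "s2 < c2" "m1 < d" "m2 < d" "(m1 + m2) mod d \<noteq> f s1 s2"
  shows "p m1 m2 s1 s2 = 0"
proof -
  let ?T = "{..<d} \<times> {..<d}"
  let ?W = "{(m1, m2). m1 < d \<and> m2 < d \<and> (m1 + m2) mod d = f s1 s2}"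
  let ?g = "\<lambda>(m1, m2). p m1 m2 s1 s2"
  have "sum ?g ?T = 1"
    using distr assms(1,2) by (simp add: cond_distr_def sum.cartesian_product)
  moreover have "x \<in> ?T \<Longrightarrow> 0 \<le> ?g x" for x
    using distr assms(1,2) by (auto simp: cond_distr_def)
  ultimately have "?g (m1, m2) = 0"
    using sum_nonneg_zero_outside[of ?T ?W ?g] win assms by auto
  then show ?thesis by simp
qed

text \<open>Alice's and Bob's marginals, extended d-periodically to the integers.  By
  non-signaling they do not depend on the other party's input, fixed here to 0.\<close>

definition alice :: "nat \<Rightarrow> int \<Rightarrow> real" where
  "alice s1 x = (\<Sum>m2<d. p (nat (x mod int d)) m2 s1 0)"

definition bob :: "nat \<Rightarrow> int \<Rightarrow> real" where
  "bob s2 y = (\<Sum>m1<d. p m1 (nat (y mod int d)) 0 s2)"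

lemma res_less: "nat (x mod int d) < d"
  using d_pos by (simp add: nat_less_iff)

lemma alice_mod: "alice s1 (x mod int d) = alice s1 x"
  by (simp add: alice_def)

text \<open>On a winning pair each output determines the other, so each marginal is a single
  entry of p.\<close>

lemma alice_eq_entry:
  assumes "s1 < c1" "s2 < c2"
  shows "alice s1 x = p (nat (x mod int d)) (nat ((int (f s1 s2) - x) mod int d)) s1 s2"
proof -
  let ?m1 = "nat (x mod int d)" and ?m2 = "nat ((int (f s1 s2) - x) mod int d)"
  have "alice s1 x = (\<Sum>m2<d. p ?m1 m2 s1 s2)"
    using ns assms c2_pos res_less unfolding alice_def non_signaling_def by blast
  also have "\<dots> = (\<Sum>m2\<in>{?m2}. p ?m1 m2 s1 s2)"
  proof (rule sum.mono_neutral_right)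
    have partner: "nat ((int (f s1 s2) - int ?m1) mod int d) = ?m2"
      using d_pos by (simp add: mod_diff_right_eq)
    show "\<forall>m2\<in>{..<d} - {?m2}. p ?m1 m2 s1 s2 = 0"
    proof
      fix m2 assume m2: "m2 \<in> {..<d} - {?m2}"
      then have "m2 < d" by simp
      with m2 have "(?m1 + m2) mod d \<noteq> f s1 s2"
        using mod_add_eq_iff[OF \<open>m2 < d\<close> f_less[OF assms]] partner by simp
      with \<open>m2 < d\<close> show "p ?m1 m2 s1 s2 = 0"
        using vanish_off_win[OF assms res_less] by blast
    qed
  qed (use res_less in auto)
  finally show ?thesis by simp
qed

lemma bob_eq_entry:
  assumes "s1 < c1" "s2 < c2"
  shows "bob s2 y = p (nat ((int (f s1 s2) - y) mod int d)) (nat (y mod int d)) s1 s2"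
proof -
  let ?m2 = "nat (y mod int d)" and ?m1 = "nat ((int (f s1 s2) - y) mod int d)"
  have "bob s2 y = (\<Sum>m1<d. p m1 ?m2 s1 s2)"
    using ns assms c1_pos res_less unfolding bob_def non_signaling_def by blast
  also have "\<dots> = (\<Sum>m1\<in>{?m1}. p m1 ?m2 s1 s2)"
  proof (rule sum.mono_neutral_right)
    have partner: "nat ((int (f s1 s2) - int ?m2) mod int d) = ?m1"
      using d_pos by (simp add: mod_diff_right_eq)
    show "\<forall>m1\<in>{..<d} - {?m1}. p m1 ?m2 s1 s2 = 0"
    proof
      fix m1 assume m1: "m1 \<in> {..<d} - {?m1}"
      then have "m1 < d" by simp
      with m1 have "(?m2 + m1) mod d \<noteq> f s1 s2"
        using mod_add_eq_iff[OF \<open>m1 < d\<close> f_less[OF assms]] partner by simp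
      with \<open>m1 < d\<close> show "p m1 ?m2 s1 s2 = 0"
        using vanish_off_win[OF assms \<open>m1 < d\<close> res_less] by (metis add.commute)
    qed
  qed (use res_less in auto)
  finally show ?thesis by simp
qed

lemma alice_bob: "s1 < c1 \<Longrightarrow> s2 < c2 \<Longrightarrow> alice s1 x = bob s2 (int (f s1 s2) - x)"
  using alice_eq_entry bob_eq_entry by (simp add: mod_diff_right_eq)

text \<open>Eliminating Bob: changing Alice's input shifts her marginal by a difference of f.\<close>

lemma alice_shift:
  "s1 < c1 \<Longrightarrow> s1' < c1 \<Longrightarrow> s2 < c2 \<Longrightarrow>
     alice s1' y = alice s1 (y + int (f s1 s2) - int (f s1' s2))"
  using alice_bob[of s1' s2 y] alice_bob[of s1 s2 "y + int (f s1 s2) - int (f s1' s2)"]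
  by simp

text \<open>The twist of f at (t1,t2); all twists vanish mod d exactly when f is additive.\<close>

definition twist :: "nat \<Rightarrow> nat \<Rightarrow> int" where
  "twist t1 t2 = int (f t1 t2) + int (f 0 0) - int (f t1 0) - int (f 0 t2)"

text \<open>Computing Alice's marginal for input t1 via s2 = 0 and via s2 = t2 shows that the
  twist is a period of her marginal for input 0.\<close>

lemma alice_twist_periodic:
  assumes "t1 < c1" "t2 < c2"
  shows "alice 0 (y + twist t1 t2) = alice 0 y"
proof -
  let ?x = "y + twist t1 t2 + int (f t1 0) - int (f 0 0)"
  have "alice t1 ?x = alice 0 (?x + int (f 0 t2) - int (f t1 t2))"
    using alice_shift[OF c1_pos assms(1,2)] .
  moreover have "alice t1 ?x = alice 0 (?x + int (f 0 0) - int (f t1 0))"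
    using alice_shift[OF c1_pos assms(1) c2_pos] .
  ultimately show ?thesis
    by (simp add: twist_def algebra_simps)
qed

lemma alice_sum: "(\<Sum>m<d. alice 0 (int m)) = 1"
  using distr c1_pos c2_pos by (simp add: cond_distr_def alice_def)

lemma alice_uniform:
  assumes "prime d" "t1 < c1" "t2 < c2"
    and "\<not> [f t1 t2 + f 0 0 = f t1 0 + f 0 t2] (mod d)" and "s1 < c1"
  shows "alice s1 x = 1 / real d"
proof -
  have "\<not> int d dvd twist t1 t2"
    using assms(4) by (simp add: twist_def cong_int_iff[symmetric] cong_iff_dvd_diff diff_diff_eq)
  then have cop: "coprime (twist t1 t2) (int d)"
    using assms(1) by (simp add: prime_imp_coprime coprime_commute)
  have "0 < int d" using d_pos by simp
  define u where "u = alice 0 0"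
  have const: "alice 0 z = u" for z
    unfolding u_def
    by (rule periodic_coprime_const[OF \<open>0 < int d\<close> alice_mod alice_twist_periodic[OF assms(2,3)] cop])
  have "real d * u = 1"
    using alice_sum const by simp
  moreover have "alice s1 x = u"
    using alice_shift[OF c1_pos assms(5) c2_pos] const by simp
  ultimately show ?thesis using d_pos by (simp add: field_simps)
qed

lemma entry_eq_alice:
  assumes "s1 < c1" "s2 < c2" "m1 < d" "m2 < d"
  shows "p m1 m2 s1 s2 = (if (m1 + m2) mod d = f s1 s2 then alice s1 (int m1) else 0)"
  using alice_eq_entry[OF assms(1,2), of "int m1"] vanish_off_win[OF assms]
    mod_add_eq_iff[OF assms(4) f_less[OF assms(1,2)]] assms(3,4)
  by auto

end

theorem lemma1:
  fixes c1 c2 d :: nat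
    and f :: "nat \<Rightarrow> nat \<Rightarrow> nat"
    and p :: "nat \<Rightarrow> nat \<Rightarrow> nat \<Rightarrow> nat \<Rightarrow> real"
  assumes "c1 \<ge> 2" and "c2 \<ge> 2" and "prime d"
    and f_range: "\<forall>s1<c1. \<forall>s2<c2. f s1 s2 < d"
    and not_additive: "\<not> (\<exists>g1 g2 :: nat \<Rightarrow> nat.
          (\<forall>s1<c1. g1 s1 < d) \<and> (\<forall>s2<c2. g2 s2 < d) \<and>
          (\<forall>s1<c1. \<forall>s2<c2. f s1 s2 = (g1 s1 + g2 s2) mod d))"
    and ns: "non_signaling d c1 c2 p"
    and win: "\<forall>s1<c1. \<forall>s2<c2.
          (\<Sum>(m1, m2) \<in> {(m1, m2). m1 < d \<and> m2 < d \<and> (m1 + m2) mod d = f s1 s2}.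
             p m1 m2 s1 s2) = 1"
  shows "\<forall>s1<c1. \<forall>s2<c2. \<forall>m1<d. \<forall>m2<d.
           p m1 m2 s1 s2 = (if (m1 + m2) mod d = f s1 s2 then 1 / real d else 0)"
proof -
  have c_pos: "0 < c1" "0 < c2" using assms(1,2) by auto
  interpret perfect_strategy d c1 c2 f p
    using c_pos f_range ns win by unfold_locales
  obtain t1 t2 where t: "t1 < c1" "t2 < c2"
    and twist: "\<not> [f t1 t2 + f 0 0 = f t1 0 + f 0 t2] (mod d)"
    using additive_if_twists_vanish[OF c_pos f_range] not_additive by blast
  show ?thesis
    using entry_eq_alice alice_uniform[OF \<open>prime d\<close> t twist] by simp
qed

end
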